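(* In the multi-parameter setting described in the context, for every $\theta\in\Theta$ one has $H_\theta\le C_\Upsilon(\theta)$ in the sense of positive semidefinite order of $p\times p$ matrices, with equality if and only if $\bigl\langle \frac{\partial w_j}{\partial\theta^l}(\theta)\big|w_k(\theta)\bigr\rangle=0$ for all $l$ and all $j,k$ with $p_j(\theta)>0$ and $p_k(\theta)>0$.
   Context: Let $\Theta\subseteq\mathbb{R}^p$ be open and $D\ge1$. For $\theta=(\theta^1,\dots,\theta^p)\in\Theta$ let $\Phi_\theta$ be a quantum channel on $D\times D$ complex matrices and $\rho_0=|\psi_0\rangle\langle\psi_0|$ a fixed pure input state. Canonical Kraus operators are $D\times D$ matrices $\Upsilon_1(\theta),\dots,\Upsilon_D(\theta)$, differentiable in $\theta$, with $\sum_k\Upsilon_k^\dagger\Upsilon_k=\mathbb{I}$, $\Phi_\theta(\rho)=\sum_k\Upsilon_k\rho\Upsilon_k^\dagger$, and $\mathrm{tr}\{\Upsilon_k\rho_0\Upsilon_j^\dagger\}=\delta_{jk}p_k(\theta)$. Write $\Upsilon_k(\theta)|\psi_0\rangle=\sqrt{p_k(\theta)}|w_k(\theta)\rangle$ with $\{|w_k(\theta)\rangle\}$ an orthonormal basis of $\mathbb{C}^D$ differentiable in $\theta$; the output is $\rho_\theta=\sum_kp_k|w_k\rangle\langle w_k|$. Each $p_k$ is assumed either identically zero or strictly positive on $\Theta$. The multi-parameter Sarovar–Milburn bound is the $p\times p$ matrix with entries $C_\Upsilon(\theta)_{jk}=4\sum_l\mathrm{Re}\,\mathrm{tr}\{\frac{\partial\Upsilon_l}{\partial\theta^j}\rho_0(\frac{\partial\Upsilon_l}{\partial\theta^k})^\dagger\}$.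 The SLD quantum information is the $p\times p$ matrix with entries $(H_\theta)_{jk}=\mathrm{Re}\,\mathrm{tr}\{\lambda^j\rho_\theta\lambda^k\}$, where $\lambda^j$ is a Hermitian solution of $\frac{\partial\rho_\theta}{\partial\theta^j}=\frac12(\rho_\theta\lambda^j+\lambda^j\rho_\theta)$. *)

theory Defs
  imports "HOL-Analysis.Analysis"
begin

definition adj :: "complex^'d^'d \<Rightarrow> complex^'d^'d" where
  "adj A = (\<chi> i j. cnj (A $ j $ i))"

definition outer :: "complex^'d \<Rightarrow> complex^'d \<Rightarrow> complex^'d^'d" where
  "outer u v = (\<chi> i j. u $ i * cnj (v $ j))"

definition cinner :: "complex^'d \<Rightarrow> complex^'d \<Rightarrow> complex" where
  "cinner u v = (\<Sum>i\<in>UNIV. cnj (u $ i) * v $ i)"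

definition pd :: "'p::finite \<Rightarrow> (real^'p \<Rightarrow> 'b::real_normed_vector) \<Rightarrow> real^'p \<Rightarrow> 'b" where
  "pd j f \<theta> = frechet_derivative f (at \<theta>) (axis j 1)"

definition out_state :: "('k::finite \<Rightarrow> 'a \<Rightarrow> complex^'d^'d) \<Rightarrow> complex^'d \<Rightarrow> 'a \<Rightarrow> complex^'d^'d" where
  "out_state Ups psi0 \<theta> = (\<Sum>k\<in>UNIV. Ups k \<theta> ** outer psi0 psi0 ** adj (Ups k \<theta>))"

definition SM_bound :: "('d::finite \<Rightarrow> real^'p \<Rightarrow> complex^'d^'d) \<Rightarrow> complex^'d \<Rightarrow> real^'p \<Rightarrow> real^'p^'p" where
  "SM_bound Ups psi0 \<theta> = (\<chi> j k. 4 * (\<Sum>l\<in>UNIV.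
      Re (trace (pd j (Ups l) \<theta> ** outer psi0 psi0 ** adj (pd k (Ups l) \<theta>)))))"

text \<open>SLD quantum information matrix computed from given SLDs lam^j.\<close>
definition SLD_info :: "('p::finite \<Rightarrow> complex^'d^'d) \<Rightarrow> complex^'d^'d \<Rightarrow> real^'p^'p" where
  "SLD_info lam rho = (\<chi> j k. Re (trace (lam j ** rho ** lam k)))"

definition psd_le :: "real^'p^'p \<Rightarrow> real^'p^'p \<Rightarrow> bool" where
  "psd_le A B \<longleftrightarrow> (\<forall>x::real^'p. 0 \<le> x \<bullet> ((B - A) *v x))"

end

theory Submission
  imports Defs
begin

(* Write v_b = Ups_b psi0 = sqrt p_b w_b. Both matrices are sums over the branches b:
   C_jk = 4 \<Sum>_b Re<d_j v_b, d_k v_b> and H_jk = \<Sum>_b Re<lam_j v_b, lam_k v_b>, and the SLD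
   equation also gives H_jk = 2 \<Sum>_b Re<lam_k v_b, d_j v_b>. Hence C - H is the real Gram matrix of
   the vectors 2 d_j v_b - lam_j v_b, so it is positive semidefinite and vanishes iff
   2 d_j v_b = lam_j v_b for all j, b. Test this equation against the basis w: differentiating
   <w_a, w_b> = \<delta>_ab and <w_a, v_b> = \<delta>_ab sqrt p_b expresses the coefficients of d_j v_b
   through <d_j w_a, w_b>, and sandwiching the SLD equation between w_a and w_b ties them to the
   matrix entries of lam_j. The equation then holds exactly when <d_l w_a, w_b> = 0 whenever
   p_a, p_b > 0. *)

lemma cinner_zero_left [simp]: "cinner 0 u = 0"
  by (simp add: cinner_def)

lemma cinner_zero_right [simp]: "cinner u 0 = 0"
  by (simp add: cinner_def)

lemma cinner_add_left: "cinner (u + v) w = cinner u w + cinner v w"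
  by (simp add: cinner_def distrib_right sum.distrib)

lemma cinner_add_right: "cinner u (v + w) = cinner u v + cinner u w"
  by (simp add: cinner_def distrib_left sum.distrib)

lemma cinner_diff_left: "cinner (u - v) w = cinner u w - cinner v w"
  by (simp add: cinner_def left_diff_distrib sum_subtractf)

lemma cinner_diff_right: "cinner u (v - w) = cinner u v - cinner u w"
  by (simp add: cinner_def right_diff_distrib sum_subtractf)

lemma cinner_scaleR_left: "cinner (c *\<^sub>R u) v = of_real c * cinner u v"
  by (simp add: cinner_def sum_distrib_left) (simp add: scaleR_conv_of_real mult_ac)

lemma cinner_scaleR_right: "cinner u (c *\<^sub>R v) = of_real c * cinner u v"
  by (simp add: cinner_def sum_distrib_left) (simp add: scaleR_conv_of_real mult_ac)

lemma cinner_smult_left: "cinner (c *s u) v = cnj c * cinner u v"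
  by (simp add: cinner_def sum_distrib_left mult_ac)

lemma cinner_smult_right: "cinner u (c *s v) = c * cinner u v"
  by (simp add: cinner_def sum_distrib_left mult_ac)

lemma cinner_sum_left: "cinner (sum f A) u = (\<Sum>a\<in>A. cinner (f a) u)"
  by (simp add: cinner_def sum_distrib_right) (rule sum.swap)

lemma cinner_sum_right: "cinner u (sum f A) = (\<Sum>a\<in>A. cinner u (f a))"
  by (simp add: cinner_def sum_distrib_left) (rule sum.swap)

lemma cnj_cinner: "cnj (cinner u v) = cinner v u"
  by (simp add: cinner_def mult.commute)

lemma Re_cinner_commute: "Re (cinner u v) = Re (cinner v u)"
  by (subst cnj_cinner[symmetric]) simp

lemma cinner_self_eq: "cinner u u = of_real (\<Sum>i\<in>UNIV. (cmod (u $ i))\<^sup>2)"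
  unfolding cinner_def of_real_sum
  by (rule sum.cong[OF refl], subst complex_norm_square, simp add: mult.commute)

lemma Re_cinner_self_nonneg: "0 \<le> Re (cinner u u)"
  by (simp add: cinner_self_eq sum_nonneg)

lemma Re_cinner_self_eq_0_iff: "Re (cinner u u) = 0 \<longleftrightarrow> u = 0"
proof
  assume "Re (cinner u u) = 0"
  then have "\<forall>i\<in>UNIV. (cmod (u $ i))\<^sup>2 = 0"
    by (simp add: cinner_self_eq sum_nonneg_eq_0_iff)
  then show "u = 0" by (simp add: vec_eq_iff)
qed simp

lemma bounded_bilinear_cinner: "bounded_bilinear cinner"
  unfolding bilinear_conv_bounded_bilinear[symmetric] bilinear_def
  by (auto intro!: linearI simp: cinner_add_left cinner_add_right cinner_scaleR_left
      cinner_scaleR_right scaleR_conv_of_real[where 'a=complex])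

lemma bounded_bilinear_outer: "bounded_bilinear outer"
  unfolding bilinear_conv_bounded_bilinear[symmetric] bilinear_def
  by (auto intro!: linearI simp: vec_eq_iff outer_def distrib_left distrib_right
      scaleR_conv_of_real[where 'a=complex])

lemma orthonormal_coefficients_eqI:
  fixes w :: "'d \<Rightarrow> complex^'d"
  assumes orthonormal: "\<And>a b. cinner (w a) (w b) = (if a = b then 1 else 0)"
    and coefficients: "\<And>a. cinner (w a) u = cinner (w a) u'"
  shows "u = u'"
proof -
  define W :: "complex^'d^'d" where "W = (\<chi> a i. cnj (w a $ i))"
  have W_mult: "W *v x = (\<chi> a. cinner (w a) x)" for x
    by (simp add: W_def matrix_vector_mult_def cinner_def)
  have "W ** adj W = mat 1"
    by (simp add: vec_eq_iff W_def adj_def matrix_matrix_mult_def mat_def orthonormal[unfolded cinner_def])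
  then have adj_W_W: "adj W ** W = mat 1"
    using matrix_left_right_inverse by blast
  have "adj W *v (W *v u) = adj W *v (W *v u')"
    by (simp add: W_mult coefficients)
  then show ?thesis by (simp add: matrix_vector_mul_assoc adj_W_W)
qed

lemma adj_adj [simp]: "adj (adj A) = A"
  by (simp add: adj_def vec_eq_iff)

lemma cinner_adj_mult: "cinner (adj M *v u) v = cinner u (M *v v)"
  by (simp add: cinner_def adj_def matrix_vector_mult_def sum_distrib_left sum_distrib_right mult_ac)
     (rule sum.swap)

lemma cnj_cinner_hermitian: "adj A = A \<Longrightarrow> cnj (cinner v (A *v u)) = cinner u (A *v v)"
  by (metis cinner_adj_mult cnj_cinner)

lemma trace_scaleR: "trace (c *\<^sub>R (M::complex^'n^'n)) = c *\<^sub>R trace M"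
  by (simp add: trace_def scaleR_sum_right)

lemma matrix_vector_mult_scaleR_left: "(c *\<^sub>R (A::complex^'n^'m)) *v x = c *\<^sub>R (A *v x)"
  by (simp add: vec_eq_iff matrix_vector_mult_def scaleR_sum_right)

lemma bounded_linear_matrix_vector_mult_left: "bounded_linear (\<lambda>A::complex^'n^'m. A *v x)"
  unfolding linear_conv_bounded_linear[symmetric]
  by (rule linearI) (simp_all add: vec_eq_iff matrix_vector_mult_def sum.distrib distrib_right
      scaleR_sum_right)

lemma outer_mult_vec: "outer x y *v z = cinner y z *s x"
  by (simp add: vec_eq_iff outer_def matrix_vector_mult_def cinner_def sum_distrib_left mult_ac)

lemma trace_outer_mult: "trace (outer x y ** B) = cinner y (B *v x)"
  by (simp add: trace_def outer_def matrix_matrix_mult_def cinner_def matrix_vector_mult_def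
      sum_distrib_left mult_ac) (rule sum.swap)

lemma trace_mult_outer_mult: "trace (A ** outer x y ** B) = cinner (adj B *v y) (A *v x)"
  by (simp add: trace_def outer_def matrix_matrix_mult_def matrix_vector_mult_def adj_def cinner_def
      sum_distrib_left sum_distrib_right mult_ac)

lemma mult_outer_mult_adj: "U ** outer u u ** adj U = outer (U *v u) (U *v u)"
  by (simp add: vec_eq_iff outer_def matrix_matrix_mult_def matrix_vector_mult_def adj_def
      sum_distrib_left sum_distrib_right mult_ac)

lemma matrix_add_rdistrib: "((A::'a::semiring_1^'n^'m) + B) ** C = A ** C + B ** C"
  by (simp add: vec_eq_iff matrix_matrix_mult_def distrib_right sum.distrib)

lemma matrix_mult_sum_left: "sum M S ** (A::'a::semiring_1^'p^'n) = (\<Sum>b\<in>S. M b ** A)"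
  by (induction S rule: infinite_finite_induct) (auto simp: matrix_add_rdistrib)

lemma matrix_mult_sum_right: "(A::'a::semiring_1^'n^'m) ** sum M S = (\<Sum>b\<in>S. A ** M b)"
  by (induction S rule: infinite_finite_induct) (auto simp: matrix_add_ldistrib)

lemma matrix_vector_mult_sum_left: "sum M S *v x = (\<Sum>b\<in>S. M b *v x)"
  by (induction S rule: infinite_finite_induct) (auto simp: matrix_vector_mult_add_rdistrib)

lemma matrix_vector_mult_smult: "(A::'a::comm_semiring_1^'n^'m) *v (c *s x) = c *s (A *v x)"
  by (simp add: vec_eq_iff matrix_vector_mult_def sum_distrib_left mult_ac)

lemma trace_sum: "trace (sum M S) = (\<Sum>b\<in>S. trace (M b))"
  by (simp add: trace_def) (rule sum.swap)

lemma out_state_eq_sum_outer: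
  "out_state Ups psi0 t = (\<Sum>b\<in>UNIV. outer (Ups b t *v psi0) (Ups b t *v psi0))"
  by (simp add: out_state_def mult_outer_mult_adj)

lemma pd_has_derivative: "(f has_derivative f') (at t) \<Longrightarrow> pd j f t = f' (axis j 1)"
  unfolding pd_def by (simp add: frechet_derivative_at[symmetric])

lemma pd_transform_within_open:
  assumes "f differentiable at t" "open S" "t \<in> S" "\<And>x. x \<in> S \<Longrightarrow> f x = g x"
  shows "pd j f t = pd j g t"
  unfolding pd_def using frechet_derivative_transform_within_open[OF assms] by simp

lemma pd_eq_0_if_constant_on_open:
  assumes "open S" "t \<in> S" "\<And>x. x \<in> S \<Longrightarrow> f x = c"
  shows "pd j f t = 0"
proof -
  have "pd j (\<lambda>_. c) t = pd j f t"
    by (rule pd_transform_within_open) (use assms in auto)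
  moreover have "pd j (\<lambda>_. c) t = 0"
    by (rule pd_has_derivative[OF has_derivative_const, simplified])
  ultimately show ?thesis by simp
qed

lemma differentiable_cinner:
  "f differentiable at t \<Longrightarrow> g differentiable at t \<Longrightarrow> (\<lambda>x. cinner (f x) (g x)) differentiable at t"
  using bounded_bilinear.FDERIV[OF bounded_bilinear_cinner] unfolding differentiable_def by blast

lemma pd_cinner:
  assumes "f differentiable at t" "g differentiable at t"
  shows "pd j (\<lambda>x. cinner (f x) (g x)) t = cinner (pd j f t) (g t) + cinner (f t) (pd j g t)"
  using pd_has_derivative[OF bounded_bilinear.FDERIV[OF bounded_bilinear_cinner,
        OF assms[unfolded frechet_derivative_works]]]
  by (simp add: pd_def)

lemma Gram_difference_psd_le:
  fixes A B :: "real^'p^'p" and g :: "'p \<Rightarrow> 'b::finite \<Rightarrow> complex^'d"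
  assumes Gram: "\<And>j k. B $ j $ k - A $ j $ k = (\<Sum>b\<in>UNIV. Re (cinner (g j b) (g k b)))"
  shows "psd_le A B"
proof -
  have "x \<bullet> ((B - A) *v x)
      = (\<Sum>b\<in>UNIV. Re (cinner (\<Sum>j\<in>UNIV. x $ j *\<^sub>R g j b) (\<Sum>k\<in>UNIV. x $ k *\<^sub>R g k b)))" for x
  proof -
    have "x \<bullet> ((B - A) *v x) = (\<Sum>j\<in>UNIV. \<Sum>k\<in>UNIV. x $ j * x $ k * (B $ j $ k - A $ j $ k))"
      by (simp add: inner_vec_def matrix_vector_mult_def sum_distrib_left mult_ac)
    also have "\<dots> = (\<Sum>j\<in>UNIV. \<Sum>k\<in>UNIV. \<Sum>b\<in>UNIV. x $ j * x $ k * Re (cinner (g j b) (g k b)))"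
      by (simp add: Gram sum_distrib_left)
    also have "\<dots> = (\<Sum>j\<in>UNIV. \<Sum>b\<in>UNIV. \<Sum>k\<in>UNIV. x $ j * x $ k * Re (cinner (g j b) (g k b)))"
      by (rule sum.cong[OF refl]) (rule sum.swap)
    also have "\<dots> = (\<Sum>b\<in>UNIV. \<Sum>j\<in>UNIV. \<Sum>k\<in>UNIV. x $ j * x $ k * Re (cinner (g j b) (g k b)))"
      by (rule sum.swap)
    also have "\<dots>
        = (\<Sum>b\<in>UNIV. Re (cinner (\<Sum>j\<in>UNIV. x $ j *\<^sub>R g j b) (\<Sum>k\<in>UNIV. x $ k *\<^sub>R g k b)))"
      by (simp add: cinner_sum_left cinner_sum_right cinner_scaleR_left cinner_scaleR_right
          sum_distrib_left mult_ac) (subst sum.swap, simp add: mult_ac)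
    finally show ?thesis .
  qed
  then show ?thesis
    unfolding psd_le_def by (simp add: sum_nonneg Re_cinner_self_nonneg)
qed

lemma Gram_difference_eq_0_iff:
  fixes A B :: "real^'p^'p" and g :: "'p \<Rightarrow> 'b::finite \<Rightarrow> complex^'d"
  assumes Gram: "\<And>j k. B $ j $ k - A $ j $ k = (\<Sum>b\<in>UNIV. Re (cinner (g j b) (g k b)))"
  shows "A = B \<longleftrightarrow> (\<forall>j b. g j b = 0)"
proof
  assume "A = B"
  then have "(\<Sum>b\<in>UNIV. Re (cinner (g j b) (g j b))) = 0" for j
    using Gram[of j j] by simp
  then show "\<forall>j b. g j b = 0"
    by (simp add: sum_nonneg_eq_0_iff Re_cinner_self_nonneg Re_cinner_self_eq_0_iff)
next
  assume "\<forall>j b. g j b = 0"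
  then have "B $ j $ k - A $ j $ k = 0" for j k
    using Gram by simp
  then show "A = B"
    by (simp add: vec_eq_iff)
qed

text \<open>In the application \<open>s b = sqrt p_b\<close>, \<open>c a b = \<langle>w_a, \<partial>v_b\<rangle>\<close>,
  \<open>x a b = \<langle>\<partial>w_a, w_b\<rangle>\<close> and \<open>M a b = \<langle>w_a, \<lambda> w_b\<rangle>\<close>; the hypotheses are the
  differentiated orthonormality relations and the SLD equation, and \<open>2 c a b = s b M a b\<close> for all
  \<open>a\<close> says \<open>2 \<partial>v_b = \<lambda> v_b\<close>.\<close>
lemma overlap_eq_0_if_SLD_coefficients:
  fixes c x M :: "'i \<Rightarrow> 'i \<Rightarrow> complex" and s :: "'i \<Rightarrow> real"
  assumes offdiag: "\<And>a b. a \<noteq> b \<Longrightarrow> c a b = - (of_real (s b) * x a b)"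
    and diag: "\<And>a. c a a - cnj (c a a) = of_real (s a) * (cnj (x a a) - x a a)"
    and skew: "\<And>a b. x a b + cnj (x b a) = 0"
    and hermitian: "\<And>a b. cnj (M b a) = M a b"
    and SLD: "\<And>a b. 2 * c a b = of_real (s b) * M a b"
    and pos: "s a > 0" "s b > 0"
  shows "x a b = 0"
proof (cases "a = b")
  case False
  have twice_x: "2 * x a' b' = - M a' b'" if "a' \<noteq> b'" "s b' > 0" for a' b'
  proof -
    have "of_real (s b') * (2 * x a' b' + M a' b') = 0"
      using SLD[of a' b'] offdiag[OF that(1)]
      by (simp add: algebra_simps) (metis add.commute neg_eq_iff_add_eq_0)
    with that(2) show ?thesis by (simp add: add_eq_0_iff)
  qed
  have "2 * cnj (x b a) = - M a b"
    using arg_cong[OF twice_x[OF not_sym[OF False] pos(1)], of cnj] by (simp add: hermitian)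
  with twice_x[OF False pos(2)] skew[of a b] show ?thesis
    by (simp add: add_eq_0_iff)
next
  case True
  have "cnj (2 * c a a) = 2 * c a a"
    by (simp only: SLD) (simp add: hermitian)
  then have "of_real (s a) * (cnj (x a a) - x a a) = 0"
    using diag[of a] by simp
  then have "cnj (x a a) = x a a"
    using pos(1) by simp
  with skew[of a a] True show ?thesis by simp
qed

lemma SLD_coefficients_if_overlap_eq_0:
  fixes c x M :: "'i \<Rightarrow> 'i \<Rightarrow> complex" and s :: "'i \<Rightarrow> real"
  assumes nonneg: "\<And>a. s a \<ge> 0"
    and vanishing: "\<And>a b. s b = 0 \<Longrightarrow> c a b = 0"
    and offdiag: "\<And>a b. a \<noteq> b \<Longrightarrow> c a b = - (of_real (s b) * x a b)"
    and diag: "\<And>a. c a a - cnj (c a a) = of_real (s a) * (cnj (x a a) - x a a)"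
    and SLD_sandwich: "\<And>a b. of_real (s b) * c a b + of_real (s a) * cnj (c b a)
        = of_real ((s a ^ 2 + s b ^ 2) / 2) * M a b"
    and overlap: "\<And>a b. s a > 0 \<Longrightarrow> s b > 0 \<Longrightarrow> x a b = 0"
  shows "2 * c a b = of_real (s b) * M a b"
proof -
  consider "s b = 0" | "s b > 0" "s a = 0" | "s a > 0" "s b > 0" "a \<noteq> b" | "s a > 0" "a = b"
    using nonneg[of a] nonneg[of b] by fastforce
  then show ?thesis
  proof cases
    case 1
    then show ?thesis by (simp add: vanishing)
  next
    case 2
    then have "of_real (s b) * (2 * c a b - of_real (s b) * M a b) = 0"
      using SLD_sandwich[of b a] by (simp add: algebra_simps power2_eq_square)
    with 2 show ?thesis by simp
  next
    case 3
    then have "c a b = 0" "c b a = 0"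
      using offdiag overlap by auto
    then have "of_real ((s a ^ 2 + s b ^ 2) / 2) * M a b = 0"
      using SLD_sandwich[of b a] by simp
    moreover have "(s a ^ 2 + s b ^ 2) / 2 \<noteq> 0"
      using 3 by (simp add: add_pos_pos)
    ultimately have "M a b = 0"
      by (simp only: mult_eq_0_iff of_real_eq_0_iff) simp
    with \<open>c a b = 0\<close> show ?thesis by simp
  next
    case 4
    then have "cnj (c a a) = c a a"
      using diag[of a] overlap[of a a] by simp
    then have "of_real (s a) * (2 * c a a - of_real (s a) * M a a) = 0"
      using SLD_sandwich[of a a] by (simp add: algebra_simps power2_eq_square)
    with 4 show ?thesis by simp
  qed
qed

locale canonical_Kraus =
  fixes \<Theta> :: "(real^'p) set"
    and Ups :: "'d \<Rightarrow> real^'p \<Rightarrow> complex^'d^'d"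
    and psi0 :: "complex^'d"
    and pr :: "'d \<Rightarrow> real^'p \<Rightarrow> real"
    and w :: "'d \<Rightarrow> real^'p \<Rightarrow> complex^'d"
    and lam :: "'p \<Rightarrow> complex^'d^'d"
    and \<theta> :: "real^'p"
  assumes open_Theta: "open \<Theta>"
    and theta_in: "\<theta> \<in> \<Theta>"
    and Ups_diff: "\<And>k. Ups k differentiable (at \<theta>)"
    and Ups_psi0: "\<And>k t. t \<in> \<Theta> \<Longrightarrow> Ups k t *v psi0 = complex_of_real (sqrt (pr k t)) *s w k t"
    and w_orthonormal: "\<And>j k t. t \<in> \<Theta> \<Longrightarrow> cinner (w j t) (w k t) = (if j = k then 1 else 0)"
    and w_diff: "\<And>k. w k differentiable (at \<theta>)"
    and pr_dichotomy: "\<And>k. (\<forall>t\<in>\<Theta>. pr k t = 0) \<or> (\<forall>t\<in>\<Theta>. pr k t > 0)"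
    and lam_herm: "\<And>j. adj (lam j) = lam j"
    and lam_SLD: "\<And>j. pd j (out_state Ups psi0) \<theta>
        = (1/2) *\<^sub>R (out_state Ups psi0 \<theta> ** lam j + lam j ** out_state Ups psi0 \<theta>)"
begin

definition branch :: "'d \<Rightarrow> real^'p \<Rightarrow> complex^'d" where
  "branch b t = Ups b t *v psi0"

abbreviation rho :: "complex^'d^'d" where
  "rho \<equiv> out_state Ups psi0 \<theta>"

lemma branch_eq: "t \<in> \<Theta> \<Longrightarrow> branch b t = complex_of_real (sqrt (pr b t)) *s w b t"
  by (simp add: branch_def Ups_psi0)

lemma pr_nonneg: "0 \<le> pr b \<theta>"
  using pr_dichotomy[of b] theta_in by (auto intro: less_imp_le)

lemma branch_has_derivative:
  "(branch b has_derivative (\<lambda>h. frechet_derivative (Ups b) (at \<theta>) h *v psi0)) (at \<theta>)"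
  unfolding branch_def[abs_def]
  by (rule bounded_linear.has_derivative[OF bounded_linear_matrix_vector_mult_left])
     (use Ups_diff frechet_derivative_works in blast)

lemma differentiable_branch: "branch b differentiable at \<theta>"
  using branch_has_derivative differentiable_def by blast

lemma pd_branch: "pd l (branch b) \<theta> = pd l (Ups b) \<theta> *v psi0"
  using pd_has_derivative[OF branch_has_derivative] by (simp add: pd_def)

lemma pd_branch_eq_0: "pr b \<theta> = 0 \<Longrightarrow> pd l (branch b) \<theta> = 0"
  using pr_dichotomy[of b] theta_in
  by (intro pd_eq_0_if_constant_on_open[OF open_Theta theta_in]) (auto simp: branch_eq)

lemma out_state_eq_sum_branch: "out_state Ups psi0 t = (\<Sum>b\<in>UNIV. outer (branch b t) (branch b t))"
  by (simp add: out_state_eq_sum_outer branch_def)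

lemma pd_out_state:
  "pd l (out_state Ups psi0) \<theta>
     = (\<Sum>b\<in>UNIV. outer (pd l (branch b) \<theta>) (branch b \<theta>) + outer (branch b \<theta>) (pd l (branch b) \<theta>))"
proof -
  have "(out_state Ups psi0 has_derivative (\<lambda>h. \<Sum>b\<in>UNIV.
          outer (branch b \<theta>) (frechet_derivative (branch b) (at \<theta>) h)
          + outer (frechet_derivative (branch b) (at \<theta>) h) (branch b \<theta>))) (at \<theta>)"
    unfolding out_state_eq_sum_branch[abs_def]
    by (rule has_derivative_sum, rule bounded_bilinear.FDERIV[OF bounded_bilinear_outer])
       (use differentiable_branch frechet_derivative_works in blast)+
  from pd_has_derivative[OF this, of l] show ?thesis
    by (simp add: pd_def add.commute)
qed

lemma SM_bound_eq:
  "SM_bound Ups psi0 \<theta> $ j $ k = 4 * (\<Sum>b\<in>UNIV. Re (cinner (pd j (branch b) \<theta>) (pd k (branch b) \<theta>)))"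
  by (simp add: SM_bound_def trace_mult_outer_mult pd_branch Re_cinner_commute)

lemma SLD_info_eq:
  "SLD_info lam rho $ j $ k = (\<Sum>b\<in>UNIV. Re (cinner (lam j *v branch b \<theta>) (lam k *v branch b \<theta>)))"
  by (simp add: SLD_info_def out_state_eq_sum_branch matrix_mult_sum_left matrix_mult_sum_right
      trace_sum trace_mult_outer_mult lam_herm Re_cinner_commute)

lemma SLD_info_commute: "SLD_info lam rho $ k $ j = SLD_info lam rho $ j $ k"
  by (simp add: SLD_info_eq Re_cinner_commute)

lemma SLD_info_eq_Re_cinner_pd:
  "SLD_info lam rho $ j $ k = 2 * (\<Sum>b\<in>UNIV. Re (cinner (lam k *v branch b \<theta>) (pd j (branch b) \<theta>)))"
proof -
  have "trace (rho ** lam j ** lam k) = trace (lam k ** rho ** lam j)"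
    by (simp add: trace_mul_sym[of "rho ** lam j" "lam k"] matrix_mul_assoc)
  then have "SLD_info lam rho $ j $ k = Re (trace (pd j (out_state Ups psi0) \<theta> ** lam k))"
    using SLD_info_commute[of j k]
    by (simp add: lam_SLD scalar_matrix_assoc[symmetric] trace_scaleR matrix_add_rdistrib trace_add
        SLD_info_def)
  also have "\<dots> = (\<Sum>b\<in>UNIV. Re (cinner (branch b \<theta>) (lam k *v pd j (branch b) \<theta>))
                    + Re (cinner (pd j (branch b) \<theta>) (lam k *v branch b \<theta>)))"
    by (simp add: pd_out_state matrix_mult_sum_left matrix_add_rdistrib trace_sum trace_add
        trace_outer_mult)
  also have "\<dots> = 2 * (\<Sum>b\<in>UNIV. Re (cinner (lam k *v branch b \<theta>) (pd j (branch b) \<theta>)))"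
  proof -
    have "cinner (branch b \<theta>) (lam k *v pd j (branch b) \<theta>)
        = cinner (lam k *v branch b \<theta>) (pd j (branch b) \<theta>)" for b
      by (metis cinner_adj_mult lam_herm)
    moreover have "Re (cinner (pd j (branch b) \<theta>) (lam k *v branch b \<theta>))
        = Re (cinner (lam k *v branch b \<theta>) (pd j (branch b) \<theta>))" for b
      by (rule Re_cinner_commute)
    ultimately show ?thesis by (simp add: sum_distrib_left)
  qed
  finally show ?thesis .
qed

definition SLD_gap :: "'p \<Rightarrow> 'd \<Rightarrow> complex^'d" where
  "SLD_gap l b = 2 *\<^sub>R pd l (branch b) \<theta> - lam l *v branch b \<theta>"

lemma SM_bound_minus_SLD_info:
  "SM_bound Ups psi0 \<theta> $ j $ k - SLD_info lam rho $ j $ k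
     = (\<Sum>b\<in>UNIV. Re (cinner (SLD_gap j b) (SLD_gap k b)))"
proof -
  have "Re (cinner (SLD_gap j b) (SLD_gap k b))
      = 4 * Re (cinner (pd j (branch b) \<theta>) (pd k (branch b) \<theta>))
        - 2 * Re (cinner (lam k *v branch b \<theta>) (pd j (branch b) \<theta>))
        - 2 * Re (cinner (lam j *v branch b \<theta>) (pd k (branch b) \<theta>))
        + Re (cinner (lam j *v branch b \<theta>) (lam k *v branch b \<theta>))" for b
    by (simp add: SLD_gap_def cinner_diff_left cinner_diff_right cinner_scaleR_left cinner_scaleR_right
        Re_cinner_commute[of "pd j (branch b) \<theta>" "lam k *v branch b \<theta>"])
  then have "(\<Sum>b\<in>UNIV. Re (cinner (SLD_gap j b) (SLD_gap k b)))
      = 4 * (\<Sum>b\<in>UNIV. Re (cinner (pd j (branch b) \<theta>) (pd k (branch b) \<theta>)))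
        - 2 * (\<Sum>b\<in>UNIV. Re (cinner (lam k *v branch b \<theta>) (pd j (branch b) \<theta>)))
        - 2 * (\<Sum>b\<in>UNIV. Re (cinner (lam j *v branch b \<theta>) (pd k (branch b) \<theta>)))
        + (\<Sum>b\<in>UNIV. Re (cinner (lam j *v branch b \<theta>) (lam k *v branch b \<theta>)))"
    by (simp add: sum.distrib sum_subtractf sum_distrib_left)
  also have "\<dots> = SM_bound Ups psi0 \<theta> $ j $ k - SLD_info lam rho $ j $ k - SLD_info lam rho $ j $ k
      + SLD_info lam rho $ j $ k"
  proof -
    have "2 * (\<Sum>b\<in>UNIV. Re (cinner (lam j *v branch b \<theta>) (pd k (branch b) \<theta>)))
        = SLD_info lam rho $ j $ k"
      by (metis SLD_info_commute SLD_info_eq_Re_cinner_pd)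
    then show ?thesis
      by (simp only: SM_bound_eq[symmetric] SLD_info_eq_Re_cinner_pd[symmetric] SLD_info_eq[symmetric])
  qed
  finally show ?thesis by simp
qed

lemma sqrt_pr_mult_self:
  "complex_of_real (sqrt (pr b \<theta>)) * complex_of_real (sqrt (pr b \<theta>)) = complex_of_real (pr b \<theta>)"
  using pr_nonneg[of b] by (simp flip: of_real_mult)

lemma cinner_pd_w_skew: "cinner (pd l (w a) \<theta>) (w b \<theta>) + cnj (cinner (pd l (w b) \<theta>) (w a \<theta>)) = 0"
proof -
  have "pd l (\<lambda>t. cinner (w a t) (w b t)) \<theta> = 0"
    by (rule pd_eq_0_if_constant_on_open[OF open_Theta theta_in]) (simp add: w_orthonormal)
  then show ?thesis
    by (simp add: pd_cinner[OF w_diff w_diff] cnj_cinner)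
qed

lemma cinner_w_pd_branch_offdiag:
  assumes "a \<noteq> b"
  shows "cinner (w a \<theta>) (pd l (branch b) \<theta>) = - (of_real (sqrt (pr b \<theta>)) * cinner (pd l (w a) \<theta>) (w b \<theta>))"
proof -
  have "pd l (\<lambda>t. cinner (w a t) (branch b t)) \<theta> = 0"
    by (rule pd_eq_0_if_constant_on_open[OF open_Theta theta_in])
       (simp add: branch_eq cinner_smult_right w_orthonormal assms)
  then have "of_real (sqrt (pr b \<theta>)) * cinner (pd l (w a) \<theta>) (w b \<theta>)
      + cinner (w a \<theta>) (pd l (branch b) \<theta>) = 0"
    by (simp add: pd_cinner[OF w_diff differentiable_branch] branch_eq[OF theta_in] cinner_smult_right)
  then show ?thesis
    by (metis add.commute eq_neg_iff_add_eq_0)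
qed

text \<open>On the diagonal, \<open>\<langle>w_a, branch a\<rangle> = sqrt (pr a)\<close> is real, which controls only the
  imaginary part of \<open>\<langle>w_a, \<partial> branch a\<rangle>\<close>.\<close>
lemma cinner_w_pd_branch_diag:
  "cinner (w a \<theta>) (pd l (branch a) \<theta>) - cnj (cinner (w a \<theta>) (pd l (branch a) \<theta>))
     = of_real (sqrt (pr a \<theta>)) * (cnj (cinner (pd l (w a) \<theta>) (w a \<theta>)) - cinner (pd l (w a) \<theta>) (w a \<theta>))"
proof -
  have "pd l (\<lambda>t. cinner (w a t) (branch a t)) \<theta> = pd l (\<lambda>t. cinner (branch a t) (w a t)) \<theta>"
    by (rule pd_transform_within_open[OF differentiable_cinner[OF w_diff differentiable_branch]
          open_Theta theta_in])
       (simp add: branch_eq cinner_smult_right cinner_smult_left w_orthonormal)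
  then have "of_real (sqrt (pr a \<theta>)) * cinner (pd l (w a) \<theta>) (w a \<theta>)
      + cinner (w a \<theta>) (pd l (branch a) \<theta>)
      = cinner (pd l (branch a) \<theta>) (w a \<theta>) + of_real (sqrt (pr a \<theta>)) * cinner (w a \<theta>) (pd l (w a) \<theta>)"
    by (simp add: pd_cinner w_diff differentiable_branch branch_eq[OF theta_in] cinner_smult_left
        cinner_smult_right)
  then show ?thesis
    by (simp add: cnj_cinner algebra_simps)
qed

lemma rho_mult_w: "rho *v w b \<theta> = of_real (pr b \<theta>) *s w b \<theta>"
proof -
  have "cinner (branch c \<theta>) (w b \<theta>) *s branch c \<theta>
      = (if c = b then of_real (sqrt (pr b \<theta>)) *s branch b \<theta> else 0)" for c
    by (simp add: branch_eq[OF theta_in] cinner_smult_left w_orthonormal[OF theta_in])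
  then have "rho *v w b \<theta> = of_real (sqrt (pr b \<theta>)) *s branch b \<theta>"
    by (simp add: out_state_eq_sum_branch matrix_vector_mult_sum_left outer_mult_vec)
  then show ?thesis
    by (simp add: branch_eq[OF theta_in] vector_smult_assoc sqrt_pr_mult_self)
qed

lemma cinner_w_rho_mult: "cinner (w a \<theta>) (rho *v y) = of_real (pr a \<theta>) * cinner (w a \<theta>) y"
proof -
  have "cinner (w a \<theta>) (cinner (branch c \<theta>) y *s branch c \<theta>)
      = (if c = a then of_real (sqrt (pr a \<theta>)) * cinner (branch a \<theta>) y else 0)" for c
    by (simp add: branch_eq[OF theta_in] cinner_smult_right w_orthonormal[OF theta_in] mult.commute)
  then have "cinner (w a \<theta>) (rho *v y) = of_real (sqrt (pr a \<theta>)) * cinner (branch a \<theta>) y"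
    by (simp add: out_state_eq_sum_branch matrix_vector_mult_sum_left outer_mult_vec cinner_sum_right)
  then show ?thesis
    by (simp add: branch_eq[OF theta_in] cinner_smult_left mult.assoc[symmetric] sqrt_pr_mult_self)
qed

text \<open>Both sides are \<open>\<langle>w_a, \<partial>\<rho> w_b\<rangle>\<close>: on the left \<open>\<partial>\<rho>\<close> is differentiated branch by branch, on
  the right it is replaced by the SLD equation, and the \<open>w_a\<close> diagonalise \<open>\<rho>\<close>.\<close>
lemma SLD_sandwich:
  "of_real (sqrt (pr b \<theta>)) * cinner (w a \<theta>) (pd l (branch b) \<theta>)
     + of_real (sqrt (pr a \<theta>)) * cnj (cinner (w b \<theta>) (pd l (branch a) \<theta>))
   = of_real ((pr a \<theta> + pr b \<theta>) / 2) * cinner (w a \<theta>) (lam l *v w b \<theta>)"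
proof -
  have branch_part: "cinner (w a \<theta>) (cinner (branch c \<theta>) (w b \<theta>) *s pd l (branch c) \<theta>)
      = (if c = b then of_real (sqrt (pr b \<theta>)) * cinner (w a \<theta>) (pd l (branch b) \<theta>) else 0)" for c
    by (simp add: branch_eq[OF theta_in] cinner_smult_left cinner_smult_right w_orthonormal[OF theta_in])
  have derivative_part: "cinner (w a \<theta>) (cinner (pd l (branch c) \<theta>) (w b \<theta>) *s branch c \<theta>)
      = (if c = a then of_real (sqrt (pr a \<theta>)) * cnj (cinner (w b \<theta>) (pd l (branch a) \<theta>)) else 0)" for c
    by (simp add: branch_eq[OF theta_in] cinner_smult_right w_orthonormal[OF theta_in] cnj_cinner
        mult.commute)
  have "cinner (w a \<theta>) (pd l (out_state Ups psi0) \<theta> *v w b \<theta>)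
      = of_real (sqrt (pr b \<theta>)) * cinner (w a \<theta>) (pd l (branch b) \<theta>)
        + of_real (sqrt (pr a \<theta>)) * cnj (cinner (w b \<theta>) (pd l (branch a) \<theta>))"
    by (simp add: pd_out_state matrix_vector_mult_sum_left matrix_vector_mult_add_rdistrib
        outer_mult_vec cinner_sum_right cinner_add_right sum.distrib branch_part derivative_part)
  moreover have "cinner (w a \<theta>) (pd l (out_state Ups psi0) \<theta> *v w b \<theta>)
      = of_real ((pr a \<theta> + pr b \<theta>) / 2) * cinner (w a \<theta>) (lam l *v w b \<theta>)"
    by (simp add: lam_SLD matrix_vector_mult_scaleR_left matrix_vector_mult_add_rdistrib
        matrix_vector_mul_assoc[symmetric] cinner_scaleR_right cinner_add_right cinner_w_rho_mult
        rho_mult_w matrix_vector_mult_smult cinner_smult_right algebra_simps)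
  ultimately show ?thesis by simp
qed

lemma SLD_gap_eq_0_iff:
  "(\<forall>l b. SLD_gap l b = 0)
   \<longleftrightarrow> (\<forall>l j k. pr j \<theta> > 0 \<longrightarrow> pr k \<theta> > 0 \<longrightarrow> cinner (pd l (w j) \<theta>) (w k \<theta>) = 0)"
proof -
  have coefficients: "2 *\<^sub>R pd l (branch b) \<theta> = lam l *v branch b \<theta> \<longleftrightarrow>
      (\<forall>a. 2 * cinner (w a \<theta>) (pd l (branch b) \<theta>)
             = of_real (sqrt (pr b \<theta>)) * cinner (w a \<theta>) (lam l *v w b \<theta>))" for l b
  proof
    assume gap: "2 *\<^sub>R pd l (branch b) \<theta> = lam l *v branch b \<theta>"
    show "\<forall>a. 2 * cinner (w a \<theta>) (pd l (branch b) \<theta>)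
             = of_real (sqrt (pr b \<theta>)) * cinner (w a \<theta>) (lam l *v w b \<theta>)"
      using arg_cong[OF gap, of "cinner (w _ \<theta>)"]
      by (simp add: cinner_scaleR_right branch_eq[OF theta_in] matrix_vector_mult_smult cinner_smult_right)
  next
    assume "\<forall>a. 2 * cinner (w a \<theta>) (pd l (branch b) \<theta>)
             = of_real (sqrt (pr b \<theta>)) * cinner (w a \<theta>) (lam l *v w b \<theta>)"
    then show "2 *\<^sub>R pd l (branch b) \<theta> = lam l *v branch b \<theta>"
      by (intro orthonormal_coefficients_eqI[OF w_orthonormal[OF theta_in]])
         (simp add: cinner_scaleR_right branch_eq[OF theta_in] matrix_vector_mult_smult cinner_smult_right)
  qed
  show ?thesis
  proof (intro iffI allI impI)
    fix l j k
    assume gap: "\<forall>l b. SLD_gap l b = 0" and pos: "pr j \<theta> > 0" "pr k \<theta> > 0"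
    then have "2 * cinner (w a \<theta>) (pd l (branch b) \<theta>)
        = of_real (sqrt (pr b \<theta>)) * cinner (w a \<theta>) (lam l *v w b \<theta>)" for a b
      using coefficients[of l b] by (simp add: SLD_gap_def)
    then show "cinner (pd l (w j) \<theta>) (w k \<theta>) = 0"
      by (intro overlap_eq_0_if_SLD_coefficients[where
            c = "\<lambda>a b. cinner (w a \<theta>) (pd l (branch b) \<theta>)" and x = "\<lambda>a b. cinner (pd l (w a) \<theta>) (w b \<theta>)"
            and M = "\<lambda>a b. cinner (w a \<theta>) (lam l *v w b \<theta>)" and s = "\<lambda>b. sqrt (pr b \<theta>)"])
         (simp_all add: cinner_w_pd_branch_offdiag cinner_w_pd_branch_diag cinner_pd_w_skew
           cnj_cinner_hermitian lam_herm pos)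
  next
    fix l b
    assume overlap: "\<forall>l j k. pr j \<theta> > 0 \<longrightarrow> pr k \<theta> > 0 \<longrightarrow> cinner (pd l (w j) \<theta>) (w k \<theta>) = 0"
    have "2 * cinner (w a \<theta>) (pd l (branch b) \<theta>)
        = of_real (sqrt (pr b \<theta>)) * cinner (w a \<theta>) (lam l *v w b \<theta>)" for a
      by (intro SLD_coefficients_if_overlap_eq_0[where
            c = "\<lambda>a b. cinner (w a \<theta>) (pd l (branch b) \<theta>)" and x = "\<lambda>a b. cinner (pd l (w a) \<theta>) (w b \<theta>)"
            and M = "\<lambda>a b. cinner (w a \<theta>) (lam l *v w b \<theta>)" and s = "\<lambda>b. sqrt (pr b \<theta>)"])
         (simp_all add: overlap pr_nonneg pd_branch_eq_0 cinner_w_pd_branch_offdiag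
           cinner_w_pd_branch_diag SLD_sandwich)
    then show "SLD_gap l b = 0"
      by (simp add: SLD_gap_def coefficients)
  qed
qed

end

theorem theorem2p9:
  fixes \<Theta> :: "(real^'p) set"
    and Ups :: "'d \<Rightarrow> real^'p \<Rightarrow> complex^'d^'d"
    and psi0 :: "complex^'d"
    and pr :: "'d \<Rightarrow> real^'p \<Rightarrow> real"
    and w :: "'d \<Rightarrow> real^'p \<Rightarrow> complex^'d"
    and lam :: "'p \<Rightarrow> complex^'d^'d"
    and \<theta> :: "real^'p"
  assumes open_Theta: "open \<Theta>"
    and psi0_unit: "cinner psi0 psi0 = 1"
    and Ups_diff: "\<And>k t. t \<in> \<Theta> \<Longrightarrow> Ups k differentiable (at t)"
    and Kraus_complete: "\<And>t. t \<in> \<Theta> \<Longrightarrow> (\<Sum>k\<in>UNIV. adj (Ups k t) ** Ups k t) = mat 1"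
    and canonical: "\<And>j k t. t \<in> \<Theta> \<Longrightarrow>
        trace (Ups k t ** outer psi0 psi0 ** adj (Ups j t))
          = (if j = k then complex_of_real (pr k t) else 0)"
    and Ups_psi0: "\<And>k t. t \<in> \<Theta> \<Longrightarrow>
        Ups k t *v psi0 = complex_of_real (sqrt (pr k t)) *s w k t"
    and w_orthonormal: "\<And>j k t. t \<in> \<Theta> \<Longrightarrow>
        cinner (w j t) (w k t) = (if j = k then 1 else 0)"
    and w_diff: "\<And>k t. t \<in> \<Theta> \<Longrightarrow> w k differentiable (at t)"
    and pr_dichotomy: "\<And>k. (\<forall>t\<in>\<Theta>. pr k t = 0) \<or> (\<forall>t\<in>\<Theta>. pr k t > 0)"
    and theta_in: "\<theta> \<in> \<Theta>"
    and lam_herm: "\<And>j. adj (lam j) = lam j"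
    and lam_SLD: "\<And>j. pd j (out_state Ups psi0) \<theta>
        = (1/2) *\<^sub>R (out_state Ups psi0 \<theta> ** lam j + lam j ** out_state Ups psi0 \<theta>)"
  shows "psd_le (SLD_info lam (out_state Ups psi0 \<theta>)) (SM_bound Ups psi0 \<theta>)
       \<and> (SLD_info lam (out_state Ups psi0 \<theta>) = SM_bound Ups psi0 \<theta>
            \<longleftrightarrow> (\<forall>l j k. pr j \<theta> > 0 \<longrightarrow> pr k \<theta> > 0 \<longrightarrow>
                    cinner (pd l (w j) \<theta>) (w k \<theta>) = 0))"
proof -
  interpret canonical_Kraus \<Theta> Ups psi0 pr w lam \<theta>
    by unfold_locales (simp_all add: open_Theta theta_in Ups_diff w_diff Ups_psi0 w_orthonormal
        pr_dichotomy lam_herm lam_SLD)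
  have Gram: "SM_bound Ups psi0 \<theta> $ j $ k - SLD_info lam (out_state Ups psi0 \<theta>) $ j $ k
      = (\<Sum>b\<in>UNIV. Re (cinner (SLD_gap j b) (SLD_gap k b)))" for j k
    by (rule SM_bound_minus_SLD_info)
  show ?thesis
    using Gram_difference_psd_le[OF Gram] Gram_difference_eq_0_iff[OF Gram] SLD_gap_eq_0_iff
    by simp
qed

end
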